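(* Assume the setting below. Let $\nu\in(0,1)$, $s>0$, $\mu>0$, $\beta>0$ satisfy $10\mu\le\min(1-\nu,\nu)\,C_\ell$ and $\beta\ge 3n/s$. Let $\theta^*$ be any minimizer over $\Theta$ of $\theta\mapsto\tilde{\mathsf R}(\theta)+\mu V(\theta)+\frac{\beta}{n}K(\theta)$, let $\hat\theta$ be the $Q$-aggregation weight vector (with these $\nu,\beta,\pi$), and let $$Z_n=(P-P_n)(\tilde\ell_{\hat\theta}-\tilde\ell_{\theta^*})-\mu\sum_{j=1}^M\hat\theta_j\|f_j-f_{\theta^*}\|_2^2-\mu\,\hat\theta^\top\mathbf H\theta^*-\frac1sK(\hat\theta).$$ Then $$R(f_{\hat\theta})\le\min_{1\le j\le M}\Big[R(f_j)+\frac{\beta}{n}\log\frac1{\pi_j}\Big]+2Z_n .$$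
   Context: Setting: $(X,Y)$ random pair in $\mathcal X\times\mathbb R$ with $|Y|\le b$ a.s. ($b>0$); data $\mathcal D=\{(X_i,Y_i)\}_{i=1}^n$ i.i.d. copies of $(X,Y)$; $f_1,\dots,f_M$ deterministic measurable functions with $\max_j|f_j(X)|\le b$ a.s.; $\Theta=\{\theta\in\mathbb R^M:\theta_j\ge0,\ \sum_j\theta_j=1\}$, $f_\theta=\sum_j\theta_jf_j$, $e_j$ canonical basis; $\|f\|_2=\sqrt{\mathbb E f(X)^2}$; prior $\pi$ with $\pi_j>0$, $\sum_j\pi_j=1$. Loss $\ell$ satisfies Assumption 1: for all $f,g\in[-b,b]$, $|\ell(Y,f)-\ell(Y,g)|\le C_b|f-g|$ a.s.; and a.s. $\ell(Y,\cdot)$ is strongly convex on $[-b,b]$ with modulus $C_\ell>0$, i.e. $\ell(Y,\alpha a+(1-\alpha)a')\le\alpha\ell(Y,a)+(1-\alpha)\ell(Y,a')-\frac{C_\ell}2\alpha(1-\alpha)(a-a')^2$. Risks: $R(f)=\mathbb E[\ell(Y,f(X))\mid\mathcal D]$, $R_n(f)=\frac1n\sum_i\ell(Y_i,f(X_i))$. For $g(y,x)$ (possibly data-dependent), $Pg=\mathbb E[g(Y,X)\mid\mathcal D]$ with $(X,Y)$ independent of $\mathcal D$, and $P_ng=\frac1n\sum_ig(Y_i,X_i)$. Notation: $\ell_\theta(y,x)=\ell(y,f_\theta(x))$, $\mathsf R(\theta)=\mathbb E\ell(Y,f_\theta(X))$; $\tilde\ell_\theta=(1-\nu)\ell_\theta+\nu\sum_j\theta_j\ell_{e_j}$,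 $\tilde{\mathsf R}(\theta)=\mathbb E\tilde\ell_\theta(Y,X)$; $K(\theta)=\sum_j\theta_j\log(1/\pi_j)$; $V(\theta)=\sum_j\theta_j\|f_j-f_\theta\|_2^2$; $\mathbf H$ is the $M\times M$ matrix with $\mathbf H_{jk}=\|f_j-f_k\|_2^2$. $Q$-aggregation: $\hat\theta$ is any minimizer over $\Theta$ of $\theta\mapsto(1-\nu)R_n(f_\theta)+\nu\sum_j\theta_jR_n(f_j)-\frac{\beta}{n}\sum_j\theta_j\log\pi_j$. *)

theory Defs
  imports "HOL-Probability.Probability"
begin

text \<open>Experts are indexed by j < M (natural numbers); weight vectors are functions
  nat \<Rightarrow> real of which only the first M coordinates matter.
  The random pair (X,Y) lives on a probability space Mp; X takes values in a
  measurable space S (the set \<X>). The data are a fixed realisation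
  (xs i, ys i), i < n.\<close>

definition wsimplex :: "nat \<Rightarrow> (nat \<Rightarrow> real) set" where
  "wsimplex M = {\<theta>. (\<forall>j<M. 0 \<le> \<theta> j) \<and> (\<Sum>j<M. \<theta> j) = 1}"

definition agg :: "nat \<Rightarrow> (nat \<Rightarrow> 'a \<Rightarrow> real) \<Rightarrow> (nat \<Rightarrow> real) \<Rightarrow> 'a \<Rightarrow> real" where
  "agg M f \<theta> x = (\<Sum>j<M. \<theta> j * f j x)"

definition Pop :: "'w measure \<Rightarrow> ('w \<Rightarrow> 'a) \<Rightarrow> ('w \<Rightarrow> real) \<Rightarrow> (real \<Rightarrow> 'a \<Rightarrow> real) \<Rightarrow> real" where
  "Pop Mp X Y g = (\<integral>\<omega>. g (Y \<omega>) (X \<omega>) \<partial>Mp)"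

definition Emp :: "nat \<Rightarrow> (nat \<Rightarrow> 'a) \<Rightarrow> (nat \<Rightarrow> real) \<Rightarrow> (real \<Rightarrow> 'a \<Rightarrow> real) \<Rightarrow> real" where
  "Emp n xs ys g = (1 / real n) * (\<Sum>i<n. g (ys i) (xs i))"

definition risk :: "'w measure \<Rightarrow> ('w \<Rightarrow> 'a) \<Rightarrow> ('w \<Rightarrow> real) \<Rightarrow> (real \<Rightarrow> real \<Rightarrow> real) \<Rightarrow> ('a \<Rightarrow> real) \<Rightarrow> real" where
  "risk Mp X Y lo g = Pop Mp X Y (\<lambda>y x. lo y (g x))"

definition emp_risk :: "nat \<Rightarrow> (nat \<Rightarrow> 'a) \<Rightarrow> (nat \<Rightarrow> real) \<Rightarrow> (real \<Rightarrow> real \<Rightarrow> real) \<Rightarrow> ('a \<Rightarrow> real) \<Rightarrow> real" where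
  "emp_risk n xs ys lo g = Emp n xs ys (\<lambda>y x. lo y (g x))"

definition sqnorm :: "'w measure \<Rightarrow> ('w \<Rightarrow> 'a) \<Rightarrow> ('a \<Rightarrow> real) \<Rightarrow> real" where
  "sqnorm Mp X g = (\<integral>\<omega>. (g (X \<omega>))\<^sup>2 \<partial>Mp)"

definition tloss :: "nat \<Rightarrow> (nat \<Rightarrow> 'a \<Rightarrow> real) \<Rightarrow> (real \<Rightarrow> real \<Rightarrow> real) \<Rightarrow> real \<Rightarrow> (nat \<Rightarrow> real) \<Rightarrow> real \<Rightarrow> 'a \<Rightarrow> real" where
  "tloss M f lo \<nu> \<theta> y x = (1 - \<nu>) * lo y (agg M f \<theta> x) + \<nu> * (\<Sum>j<M. \<theta> j * lo y (f j x))"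

definition Kdiv :: "nat \<Rightarrow> (nat \<Rightarrow> real) \<Rightarrow> (nat \<Rightarrow> real) \<Rightarrow> real" where
  "Kdiv M \<pi> \<theta> = (\<Sum>j<M. \<theta> j * ln (1 / \<pi> j))"

definition Vvar :: "'w measure \<Rightarrow> ('w \<Rightarrow> 'a) \<Rightarrow> nat \<Rightarrow> (nat \<Rightarrow> 'a \<Rightarrow> real) \<Rightarrow> (nat \<Rightarrow> real) \<Rightarrow> real" where
  "Vvar Mp X M f \<theta> = (\<Sum>j<M. \<theta> j * sqnorm Mp X (\<lambda>x. f j x - agg M f \<theta> x))"

definition Hmat :: "'w measure \<Rightarrow> ('w \<Rightarrow> 'a) \<Rightarrow> (nat \<Rightarrow> 'a \<Rightarrow> real) \<Rightarrow> nat \<Rightarrow> nat \<Rightarrow> real" where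
  "Hmat Mp X f j k = sqnorm Mp X (\<lambda>x. f j x - f k x)"

definition Qcrit :: "nat \<Rightarrow> (nat \<Rightarrow> 'a) \<Rightarrow> (nat \<Rightarrow> real) \<Rightarrow> nat \<Rightarrow> (nat \<Rightarrow> 'a \<Rightarrow> real) \<Rightarrow> (real \<Rightarrow> real \<Rightarrow> real)
    \<Rightarrow> real \<Rightarrow> real \<Rightarrow> (nat \<Rightarrow> real) \<Rightarrow> (nat \<Rightarrow> real) \<Rightarrow> real" where
  "Qcrit n xs ys M f lo \<nu> \<beta> \<pi> \<theta> =
     (1 - \<nu>) * emp_risk n xs ys lo (agg M f \<theta>) + \<nu> * (\<Sum>j<M. \<theta> j * emp_risk n xs ys lo (f j))
     - (\<beta> / real n) * (\<Sum>j<M. \<theta> j * ln (\<pi> j))"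

definition Pcrit :: "'w measure \<Rightarrow> ('w \<Rightarrow> 'a) \<Rightarrow> ('w \<Rightarrow> real) \<Rightarrow> nat \<Rightarrow> nat \<Rightarrow> (nat \<Rightarrow> 'a \<Rightarrow> real)
    \<Rightarrow> (real \<Rightarrow> real \<Rightarrow> real) \<Rightarrow> real \<Rightarrow> real \<Rightarrow> real \<Rightarrow> (nat \<Rightarrow> real) \<Rightarrow> (nat \<Rightarrow> real) \<Rightarrow> real" where
  "Pcrit Mp X Y n M f lo \<nu> \<mu> \<beta> \<pi> \<theta> =
     Pop Mp X Y (tloss M f lo \<nu> \<theta>) + \<mu> * Vvar Mp X M f \<theta> + (\<beta> / real n) * Kdiv M \<pi> \<theta>"

definition Zn :: "'w measure \<Rightarrow> ('w \<Rightarrow> 'a) \<Rightarrow> ('w \<Rightarrow> real) \<Rightarrow> nat \<Rightarrow> (nat \<Rightarrow> 'a) \<Rightarrow> (nat \<Rightarrow> real)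
    \<Rightarrow> nat \<Rightarrow> (nat \<Rightarrow> 'a \<Rightarrow> real) \<Rightarrow> (real \<Rightarrow> real \<Rightarrow> real) \<Rightarrow> real \<Rightarrow> real \<Rightarrow> real \<Rightarrow> (nat \<Rightarrow> real)
    \<Rightarrow> (nat \<Rightarrow> real) \<Rightarrow> (nat \<Rightarrow> real) \<Rightarrow> real" where
  "Zn Mp X Y n xs ys M f lo \<nu> \<mu> s \<pi> \<theta>h \<theta>s =
     (let g = (\<lambda>y x. tloss M f lo \<nu> \<theta>h y x - tloss M f lo \<nu> \<theta>s y x) in
        Pop Mp X Y g - Emp n xs ys g)
     - \<mu> * (\<Sum>j<M. \<theta>h j * sqnorm Mp X (\<lambda>x. f j x - agg M f \<theta>s x))
     - \<mu> * (\<Sum>j<M. \<Sum>k<M. \<theta>h j * Hmat Mp X f j k * \<theta>s k)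
     - (1 / s) * Kdiv M \<pi> \<theta>h"

definition loss_ok :: "(real \<Rightarrow> real \<Rightarrow> real) \<Rightarrow> real \<Rightarrow> real \<Rightarrow> real \<Rightarrow> real \<Rightarrow> bool" where
  "loss_ok lo b Cb Cl y \<longleftrightarrow>
     (\<forall>a\<in>{-b..b}. \<forall>a'\<in>{-b..b}. \<bar>lo y a - lo y a'\<bar> \<le> Cb * \<bar>a - a'\<bar>) \<and>
     (\<forall>a\<in>{-b..b}. \<forall>a'\<in>{-b..b}. \<forall>\<alpha>\<in>{0..1}.
        lo y (\<alpha> * a + (1 - \<alpha>) * a') \<le> \<alpha> * lo y a + (1 - \<alpha>) * lo y a' - Cl / 2 * \<alpha> * (1 - \<alpha>) * (a - a')\<^sup>2)"

end

theory Submission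
  imports Defs
begin

(* Strong convexity of the loss gives R(f_theta) <= sum_j theta_j R(f_j) - C_l/2 V(theta), and makes
   theta |-> R(f_theta) strongly convex along segments with defect C_l/2 a(1-a) ||f_theta - f_theta'||^2,
   while V is exactly quadratic along segments. Hence the population criterion G is strongly convex
   along segments, and at its minimiser theta_s this yields the quadratic growth
   G(theta) - G(theta_s) >= 4 mu ||f_theta - f_theta_s||^2.  Writing Z_n through the identities
   sum_j theta_j ||f_j - f_theta'||^2 = V(theta) + ||f_theta - f_theta'||^2 and
   theta^T H theta' = V(theta) + V(theta') + ||f_theta - f_theta'||^2, the optimality of the
   Q-aggregate for the empirical criterion and the conditions 10 mu <= nu C_l, beta >= 3n/s turn
   this into R(f_hat) <= G(theta_s) + 2 Z_n.  Finally G(theta_s) <= G(e_j) = R(f_j) + beta/n log(1/pi_j). *)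

definition strongly_convex_on :: "real set \<Rightarrow> real \<Rightarrow> (real \<Rightarrow> real) \<Rightarrow> bool" where
  "strongly_convex_on C c \<phi> \<longleftrightarrow>
     (\<forall>a\<in>C. \<forall>a'\<in>C. \<forall>\<alpha>\<in>{0..1}.
        \<phi> (\<alpha> * a + (1 - \<alpha>) * a') \<le> \<alpha> * \<phi> a + (1 - \<alpha>) * \<phi> a' - c / 2 * \<alpha> * (1 - \<alpha>) * (a - a')\<^sup>2)"

lemma strongly_convex_onD:
  "strongly_convex_on C c \<phi> \<Longrightarrow> a \<in> C \<Longrightarrow> a' \<in> C \<Longrightarrow> 0 \<le> \<alpha> \<Longrightarrow> \<alpha> \<le> 1 \<Longrightarrow>
    \<phi> (\<alpha> * a + (1 - \<alpha>) * a') \<le> \<alpha> * \<phi> a + (1 - \<alpha>) * \<phi> a' - c / 2 * \<alpha> * (1 - \<alpha>) * (a - a')\<^sup>2"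
  by (simp add: strongly_convex_on_def)

lemma loss_ok_strongly_convex_on: "loss_ok lo b Cb Cl y \<Longrightarrow> strongly_convex_on {-b..b} Cl (lo y)"
  by (simp add: loss_ok_def strongly_convex_on_def)

lemma weighted_sum_sq_dev_eq:
  fixes w a :: "'i \<Rightarrow> real"
  assumes "(\<Sum>i\<in>A. w i) = 1"
  shows "(\<Sum>i\<in>A. w i * (a i - c)\<^sup>2) = (\<Sum>i\<in>A. w i * (a i)\<^sup>2) - 2 * c * (\<Sum>i\<in>A. w i * a i) + c\<^sup>2"
proof -
  have "(\<Sum>i\<in>A. w i * (a i - c)\<^sup>2) = (\<Sum>i\<in>A. w i * (a i)\<^sup>2) - 2 * c * (\<Sum>i\<in>A. w i * a i) + c\<^sup>2 * (\<Sum>i\<in>A. w i)"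
    by (simp add: power2_eq_square algebra_simps sum.distrib sum_subtractf sum_distrib_left sum_distrib_right)
  with assms show ?thesis by simp
qed

lemma strongly_convex_on_jensen:
  fixes \<phi> :: "real \<Rightarrow> real" and w a :: "'i \<Rightarrow> real"
  assumes sc: "strongly_convex_on C c \<phi>" and "convex C"
    and "finite I" "I \<noteq> {}" and w1: "(\<Sum>i\<in>I. w i) = 1" and "\<And>i. i \<in> I \<Longrightarrow> w i \<ge> 0"
    and "\<And>i. i \<in> I \<Longrightarrow> a i \<in> C"
  shows "\<phi> (\<Sum>i\<in>I. w i * a i)
    \<le> (\<Sum>i\<in>I. w i * \<phi> (a i)) - c / 2 * (\<Sum>i\<in>I. w i * (a i - (\<Sum>k\<in>I. w k * a k))\<^sup>2)"
proof -
  define \<psi> where "\<psi> t = \<phi> t - c / 2 * t\<^sup>2" for t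
  have "convex_on C \<psi>"
  proof (rule convex_onI)
    fix t x y :: real assume "0 < t" "t < 1" "x \<in> C" "y \<in> C"
    then have "\<phi> ((1 - t) * x + (1 - (1 - t)) * y)
        \<le> (1 - t) * \<phi> x + (1 - (1 - t)) * \<phi> y - c / 2 * (1 - t) * (1 - (1 - t)) * (x - y)\<^sup>2"
      by (intro strongly_convex_onD[OF sc]) auto
    moreover have "c / 2 * ((1 - t) * x + t * y)\<^sup>2
        = (1 - t) * (c / 2 * x\<^sup>2) + t * (c / 2 * y\<^sup>2) - c / 2 * (1 - t) * t * (x - y)\<^sup>2"
      by (simp add: power2_eq_square field_simps)
    ultimately show "\<psi> ((1 - t) *\<^sub>R x + t *\<^sub>R y) \<le> (1 - t) * \<psi> x + t * \<psi> y"
      unfolding \<psi>_def by (simp add: algebra_simps)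
  qed fact
  then have "\<psi> (\<Sum>i\<in>I. w i * a i) \<le> (\<Sum>i\<in>I. w i * \<psi> (a i))"
    using convex_on_sum[of I C \<psi> w a] assms by simp
  moreover have "(\<Sum>i\<in>I. w i * \<psi> (a i)) = (\<Sum>i\<in>I. w i * \<phi> (a i)) - c / 2 * (\<Sum>i\<in>I. w i * (a i)\<^sup>2)"
    unfolding \<psi>_def by (simp add: algebra_simps sum_subtractf sum_distrib_left)
  ultimately show ?thesis
    unfolding \<psi>_def weighted_sum_sq_dev_eq[OF w1] by (simp add: power2_eq_square algebra_simps)
qed

lemma chord_defect_le_of_min:
  fixes g :: "real \<Rightarrow> real" and a b c :: real
  assumes min: "\<And>\<alpha>. 0 < \<alpha> \<Longrightarrow> \<alpha> \<le> 1 \<Longrightarrow> a \<le> g \<alpha>"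
    and chord: "\<And>\<alpha>. 0 < \<alpha> \<Longrightarrow> \<alpha> \<le> 1 \<Longrightarrow> g \<alpha> \<le> \<alpha> * b + (1 - \<alpha>) * a - c * \<alpha> * (1 - \<alpha>)"
  shows "c \<le> b - a"
proof -
  have "c * (1 - \<alpha>) \<le> b - a" if "0 < \<alpha>" "\<alpha> \<le> 1" for \<alpha>
  proof -
    have "\<alpha> * (c * (1 - \<alpha>)) \<le> \<alpha> * (b - a)"
      using min[OF that] chord[OF that] by (simp add: algebra_simps)
    with that show ?thesis by simp
  qed
  then have "eventually (\<lambda>\<alpha>. c * (1 - \<alpha>) \<le> b - a) (at_right 0)"
    by (intro eventually_at_rightI[of 0 1]) auto
  moreover have "((\<lambda>\<alpha>. c * (1 - \<alpha>)) \<longlongrightarrow> c * (1 - 0)) (at_right 0)"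
    by (intro tendsto_intros)
  ultimately show ?thesis
    using tendsto_upperbound[OF _ _ trivial_limit_at_right_real] by fastforce
qed

definition wcomb :: "real \<Rightarrow> (nat \<Rightarrow> real) \<Rightarrow> (nat \<Rightarrow> real) \<Rightarrow> nat \<Rightarrow> real" where
  "wcomb \<alpha> \<theta> \<theta>' k = \<alpha> * \<theta> k + (1 - \<alpha>) * \<theta>' k"

definition unit_weight :: "nat \<Rightarrow> nat \<Rightarrow> real" where
  "unit_weight j k = (if k = j then 1 else 0)"

definition dispersion :: "nat \<Rightarrow> (nat \<Rightarrow> 'a \<Rightarrow> real) \<Rightarrow> (nat \<Rightarrow> real) \<Rightarrow> 'a \<Rightarrow> real" where
  "dispersion M f \<theta> x = (\<Sum>j<M. \<theta> j * (f j x - agg M f \<theta> x)\<^sup>2)"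

lemma wsimplex_sum_eq_1: "\<theta> \<in> wsimplex M \<Longrightarrow> (\<Sum>j<M. \<theta> j) = 1"
  by (simp add: wsimplex_def)

lemma wcomb_in_wsimplex:
  "\<theta> \<in> wsimplex M \<Longrightarrow> \<theta>' \<in> wsimplex M \<Longrightarrow> 0 \<le> \<alpha> \<Longrightarrow> \<alpha> \<le> 1 \<Longrightarrow> wcomb \<alpha> \<theta> \<theta>' \<in> wsimplex M"
  by (auto simp: wsimplex_def wcomb_def sum.distrib sum_distrib_left[symmetric])

lemma sum_wcomb_mult:
  "(\<Sum>j<M. wcomb \<alpha> \<theta> \<theta>' j * r j) = \<alpha> * (\<Sum>j<M. \<theta> j * r j) + (1 - \<alpha>) * (\<Sum>j<M. \<theta>' j * r j)"
  by (simp add: wcomb_def distrib_right sum.distrib sum_distrib_left mult.assoc)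

lemma agg_wcomb: "agg M f (wcomb \<alpha> \<theta> \<theta>') x = \<alpha> * agg M f \<theta> x + (1 - \<alpha>) * agg M f \<theta>' x"
  unfolding agg_def by (rule sum_wcomb_mult)

lemma Kdiv_wcomb: "Kdiv M \<pi> (wcomb \<alpha> \<theta> \<theta>') = \<alpha> * Kdiv M \<pi> \<theta> + (1 - \<alpha>) * Kdiv M \<pi> \<theta>'"
  unfolding Kdiv_def by (rule sum_wcomb_mult)

lemma unit_weight_in_wsimplex: "j < M \<Longrightarrow> unit_weight j \<in> wsimplex M"
  by (auto simp: wsimplex_def unit_weight_def)

lemma sum_unit_weight_mult: "j < M \<Longrightarrow> (\<Sum>k<M. unit_weight j k * r k) = r j"
  by (simp add: unit_weight_def if_distrib[of "\<lambda>c. c * _"] cong: if_cong)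

lemma agg_unit_weight: "j < M \<Longrightarrow> agg M f (unit_weight j) = f j"
  by (simp add: fun_eq_iff agg_def sum_unit_weight_mult)

lemma Kdiv_unit_weight: "j < M \<Longrightarrow> Kdiv M \<pi> (unit_weight j) = ln (1 / \<pi> j)"
  by (simp add: Kdiv_def sum_unit_weight_mult)

lemma dispersion_unit_weight: "j < M \<Longrightarrow> dispersion M f (unit_weight j) x = 0"
  by (simp add: dispersion_def agg_unit_weight sum_unit_weight_mult)

lemma abs_agg_le:
  assumes "\<theta> \<in> wsimplex M" "\<forall>j<M. \<bar>f j x\<bar> \<le> b"
  shows "\<bar>agg M f \<theta> x\<bar> \<le> b"
proof -
  have "\<bar>agg M f \<theta> x\<bar> \<le> (\<Sum>j<M. \<theta> j * b)"
    unfolding agg_def using assms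
    by (intro order.trans[OF sum_abs] sum_mono) (auto simp: wsimplex_def abs_mult intro: mult_left_mono)
  also have "\<dots> = b"
    using assms by (simp add: wsimplex_def sum_distrib_right[symmetric])
  finally show ?thesis .
qed

lemma Kdiv_nonneg:
  assumes "\<theta> \<in> wsimplex M" "\<And>j. j < M \<Longrightarrow> \<pi> j > 0" "(\<Sum>j<M. \<pi> j) = 1"
  shows "Kdiv M \<pi> \<theta> \<ge> 0"
  unfolding Kdiv_def
proof (intro sum_nonneg mult_nonneg_nonneg)
  fix j assume j: "j \<in> {..<M}"
  then show "0 \<le> \<theta> j" using assms(1) by (simp add: wsimplex_def)
  have "\<pi> j \<le> (\<Sum>k<M. \<pi> k)"
    using j assms(2) by (intro member_le_sum) (auto intro: less_imp_le)
  with j assms show "0 \<le> ln (1 / \<pi> j)" by simp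
qed

lemma dispersion_eq:
  "(\<Sum>j<M. \<theta> j) = 1 \<Longrightarrow> dispersion M f \<theta> x = (\<Sum>j<M. \<theta> j * (f j x)\<^sup>2) - (agg M f \<theta> x)\<^sup>2"
  unfolding dispersion_def weighted_sum_sq_dev_eq[of \<theta>] by (simp add: agg_def power2_eq_square)

lemma sum_sq_dev_agg_eq:
  assumes "(\<Sum>j<M. \<theta> j) = 1"
  shows "(\<Sum>j<M. \<theta> j * (f j x - agg M f \<theta>' x)\<^sup>2)
    = dispersion M f \<theta> x + (agg M f \<theta> x - agg M f \<theta>' x)\<^sup>2"
  using assms unfolding dispersion_eq[OF assms] weighted_sum_sq_dev_eq[OF assms]
  by (simp add: agg_def power2_eq_square algebra_simps)

lemma sum_pairwise_sq_dist_eq: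
  assumes "(\<Sum>j<M. \<theta> j) = 1" "(\<Sum>k<M. \<theta>' k) = 1"
  shows "(\<Sum>j<M. \<Sum>k<M. \<theta> j * (f j x - f k x)\<^sup>2 * \<theta>' k)
    = dispersion M f \<theta> x + dispersion M f \<theta>' x + (agg M f \<theta> x - agg M f \<theta>' x)\<^sup>2"
proof -
  have "(\<Sum>j<M. \<Sum>k<M. \<theta> j * (f j x - f k x)\<^sup>2 * \<theta>' k)
      = (\<Sum>j<M. \<theta> j * (\<Sum>k<M. \<theta>' k * (f k x - f j x)\<^sup>2))"
    by (simp add: sum_distrib_left power2_commute algebra_simps)
  also have "\<dots> = (\<Sum>j<M. \<theta> j * (dispersion M f \<theta>' x + (f j x - agg M f \<theta>' x)\<^sup>2))"
  proof (intro sum.cong refl)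
    fix j assume "j \<in> {..<M}"
    then show "\<theta> j * (\<Sum>k<M. \<theta>' k * (f k x - f j x)\<^sup>2)
        = \<theta> j * (dispersion M f \<theta>' x + (f j x - agg M f \<theta>' x)\<^sup>2)"
      using sum_sq_dev_agg_eq[OF assms(2), of f x "unit_weight j"]
      by (simp add: agg_unit_weight power2_commute)
  qed
  also have "\<dots> = dispersion M f \<theta>' x + (\<Sum>j<M. \<theta> j * (f j x - agg M f \<theta>' x)\<^sup>2)"
    using assms(1) by (simp add: algebra_simps sum.distrib sum_distrib_right[symmetric])
  finally show ?thesis
    unfolding sum_sq_dev_agg_eq[OF assms(1)] by simp
qed

lemma dispersion_wcomb:
  assumes "(\<Sum>j<M. \<theta> j) = 1" "(\<Sum>j<M. \<theta>' j) = 1"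
  shows "dispersion M f (wcomb \<alpha> \<theta> \<theta>') x
    = \<alpha> * dispersion M f \<theta> x + (1 - \<alpha>) * dispersion M f \<theta>' x
      + \<alpha> * (1 - \<alpha>) * (agg M f \<theta> x - agg M f \<theta>' x)\<^sup>2"
proof -
  have comb: "(\<Sum>j<M. wcomb \<alpha> \<theta> \<theta>' j) = 1"
    using sum_wcomb_mult[where r = "\<lambda>_. 1"] assms by simp
  then show ?thesis
    unfolding dispersion_eq[OF assms(1)] dispersion_eq[OF assms(2)] dispersion_eq[OF comb]
      sum_wcomb_mult agg_wcomb
    by (simp add: power2_eq_square algebra_simps)
qed

lemma Emp_diff: "Emp n xs ys (\<lambda>y x. g y x - h y x) = Emp n xs ys g - Emp n xs ys h"
  by (simp add: Emp_def sum_subtractf right_diff_distrib)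

lemma Emp_tloss:
  "Emp n xs ys (tloss M f lo \<nu> \<theta>)
    = (1 - \<nu>) * emp_risk n xs ys lo (agg M f \<theta>) + \<nu> * (\<Sum>j<M. \<theta> j * emp_risk n xs ys lo (f j))"
proof -
  have "(\<Sum>i<n. \<Sum>j<M. \<theta> j * lo (ys i) (f j (xs i))) = (\<Sum>j<M. \<theta> j * (\<Sum>i<n. lo (ys i) (f j (xs i))))"
    by (simp add: sum_distrib_left sum.swap[of _ "{..<n}"])
  then show ?thesis
    unfolding Emp_def emp_risk_def tloss_def
    by (simp add: sum.distrib sum_distrib_left[symmetric])
      (simp add: sum_distrib_left algebra_simps add_divide_distrib sum_divide_distrib)
qed

lemma Qcrit_eq:
  assumes "\<And>j. j < M \<Longrightarrow> \<pi> j > 0"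
  shows "Qcrit n xs ys M f lo \<nu> \<beta> \<pi> \<theta> = Emp n xs ys (tloss M f lo \<nu> \<theta>) + \<beta> / real n * Kdiv M \<pi> \<theta>"
proof -
  have "Kdiv M \<pi> \<theta> = - (\<Sum>j<M. \<theta> j * ln (\<pi> j))"
    unfolding Kdiv_def sum_negf[symmetric] using assms by (intro sum.cong refl) (simp add: ln_div)
  then show ?thesis by (simp add: Qcrit_def Emp_tloss)
qed

lemma sqnorm_nonneg: "sqnorm Mp X g \<ge> 0"
  by (simp add: sqnorm_def)

lemma (in finite_measure) integrable_square_of_AE_bounded:
  fixes u :: "'a \<Rightarrow> real"
  assumes "u \<in> borel_measurable M" "AE x in M. \<bar>u x\<bar> \<le> B"
  shows "integrable M (\<lambda>x. (u x)\<^sup>2)"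
proof (rule integrable_const_bound[where B = "B\<^sup>2"])
  show "AE x in M. norm ((u x)\<^sup>2) \<le> B\<^sup>2"
    using assms(2) by eventually_elim (simp add: abs_le_square_iff[symmetric])
qed (use assms(1) in simp)

locale aggregation_model = prob_space Mp
  for Mp :: "'w measure" +
  fixes S :: "'a measure" and X :: "'w \<Rightarrow> 'a" and Y :: "'w \<Rightarrow> real"
    and M :: nat and f :: "nat \<Rightarrow> 'a \<Rightarrow> real" and lo :: "real \<Rightarrow> real \<Rightarrow> real" and b Cl :: real
  assumes X_meas: "X \<in> measurable Mp S"
    and f_meas: "\<And>j. j < M \<Longrightarrow> f j \<in> borel_measurable S"
    and f_bounded: "AE \<omega> in Mp. \<forall>j<M. \<bar>f j (X \<omega>)\<bar> \<le> b"
    and loss_strongly_convex: "AE \<omega> in Mp. strongly_convex_on {-b..b} Cl (lo (Y \<omega>))"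
    and integrable_loss_agg: "\<And>\<theta>. \<theta> \<in> wsimplex M \<Longrightarrow> integrable Mp (\<lambda>\<omega>. lo (Y \<omega>) (agg M f \<theta> (X \<omega>)))"
begin

lemma borel_measurable_agg_X: "(\<lambda>\<omega>. agg M f \<theta> (X \<omega>)) \<in> borel_measurable Mp"
proof -
  have "(\<lambda>\<omega>. f j (X \<omega>)) \<in> borel_measurable Mp" if "j < M" for j
    using measurable_comp[OF X_meas f_meas[OF that]] by (simp add: comp_def)
  then show ?thesis
    unfolding agg_def by (intro borel_measurable_sum borel_measurable_times) auto
qed

lemma AE_abs_agg_le: "AE \<omega> in Mp. \<forall>\<theta>\<in>wsimplex M. \<bar>agg M f \<theta> (X \<omega>)\<bar> \<le> b"
  using f_bounded by eventually_elim (auto intro: abs_agg_le)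

lemma integrable_sq_agg_diff:
  assumes "\<theta> \<in> wsimplex M" "\<theta>' \<in> wsimplex M"
  shows "integrable Mp (\<lambda>\<omega>. (agg M f \<theta> (X \<omega>) - agg M f \<theta>' (X \<omega>))\<^sup>2)"
proof (rule integrable_square_of_AE_bounded)
  show "AE \<omega> in Mp. \<bar>agg M f \<theta> (X \<omega>) - agg M f \<theta>' (X \<omega>)\<bar> \<le> 2 * b"
    using AE_abs_agg_le
  proof eventually_elim
    case (elim \<omega>)
    with assms have "\<bar>agg M f \<theta> (X \<omega>)\<bar> \<le> b" "\<bar>agg M f \<theta>' (X \<omega>)\<bar> \<le> b" by auto
    then show ?case by linarith
  qed
qed (intro borel_measurable_diff borel_measurable_agg_X)

lemma integrable_loss_f: "j < M \<Longrightarrow> integrable Mp (\<lambda>\<omega>. lo (Y \<omega>) (f j (X \<omega>)))"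
  using integrable_loss_agg[OF unit_weight_in_wsimplex] by (simp add: agg_unit_weight)

lemma integrable_sq_f_agg_diff:
  "j < M \<Longrightarrow> \<theta> \<in> wsimplex M \<Longrightarrow> integrable Mp (\<lambda>\<omega>. (f j (X \<omega>) - agg M f \<theta> (X \<omega>))\<^sup>2)"
  using integrable_sq_agg_diff[OF unit_weight_in_wsimplex] by (simp add: agg_unit_weight)

lemma integrable_sq_f_diff:
  "j < M \<Longrightarrow> k < M \<Longrightarrow> integrable Mp (\<lambda>\<omega>. (f j (X \<omega>) - f k (X \<omega>))\<^sup>2)"
  using integrable_sq_agg_diff[OF unit_weight_in_wsimplex unit_weight_in_wsimplex] by (simp add: agg_unit_weight)

lemma integrable_dispersion: "\<theta> \<in> wsimplex M \<Longrightarrow> integrable Mp (\<lambda>\<omega>. dispersion M f \<theta> (X \<omega>))"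
  unfolding dispersion_def by (auto intro!: Bochner_Integration.integrable_sum intro: integrable_sq_f_agg_diff)

lemma integrable_tloss: "\<theta> \<in> wsimplex M \<Longrightarrow> integrable Mp (\<lambda>\<omega>. tloss M f lo \<nu> \<theta> (Y \<omega>) (X \<omega>))"
  unfolding tloss_def
  by (intro Bochner_Integration.integrable_add integrable_mult_right Bochner_Integration.integrable_sum
      integrable_loss_agg integrable_loss_f) auto

lemma Vvar_eq_integral: "\<theta> \<in> wsimplex M \<Longrightarrow> Vvar Mp X M f \<theta> = (\<integral>\<omega>. dispersion M f \<theta> (X \<omega>) \<partial>Mp)"
  unfolding Vvar_def dispersion_def sqnorm_def
  by (subst Bochner_Integration.integral_sum) (auto intro: integrable_sq_f_agg_diff)

lemma Vvar_nonneg: "\<theta> \<in> wsimplex M \<Longrightarrow> Vvar Mp X M f \<theta> \<ge> 0"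
  unfolding Vvar_eq_integral dispersion_def
  by (intro integral_nonneg_AE AE_I2 sum_nonneg mult_nonneg_nonneg) (auto simp: wsimplex_def)

lemma Pop_tloss:
  assumes "\<theta> \<in> wsimplex M"
  shows "Pop Mp X Y (tloss M f lo \<nu> \<theta>)
    = (1 - \<nu>) * risk Mp X Y lo (agg M f \<theta>) + \<nu> * (\<Sum>j<M. \<theta> j * risk Mp X Y lo (f j))"
  unfolding Pop_def risk_def tloss_def
  by (subst Bochner_Integration.integral_add)
    (auto intro!: integrable_mult_right Bochner_Integration.integrable_sum
      intro: integrable_loss_agg[OF assms] integrable_loss_f
      simp: Bochner_Integration.integral_sum integrable_loss_f)

lemma Pcrit_eq:
  "\<theta> \<in> wsimplex M \<Longrightarrow> Pcrit Mp X Y n M f lo \<nu> \<mu> \<beta> \<pi> \<theta>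
    = (1 - \<nu>) * risk Mp X Y lo (agg M f \<theta>) + \<nu> * (\<Sum>j<M. \<theta> j * risk Mp X Y lo (f j))
      + \<mu> * Vvar Mp X M f \<theta> + \<beta> / real n * Kdiv M \<pi> \<theta>"
  by (simp add: Pcrit_def Pop_tloss)

lemma Pcrit_unit_weight:
  "j < M \<Longrightarrow> Pcrit Mp X Y n M f lo \<nu> \<mu> \<beta> \<pi> (unit_weight j)
    = risk Mp X Y lo (f j) + \<beta> / real n * ln (1 / \<pi> j)"
  by (simp add: Pcrit_eq unit_weight_in_wsimplex agg_unit_weight sum_unit_weight_mult Kdiv_unit_weight
      Vvar_eq_integral dispersion_unit_weight algebra_simps)

lemma risk_agg_le_mixture:
  assumes "\<theta> \<in> wsimplex M"
  shows "risk Mp X Y lo (agg M f \<theta>)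
    \<le> (\<Sum>j<M. \<theta> j * risk Mp X Y lo (f j)) - Cl / 2 * Vvar Mp X M f \<theta>"
proof -
  have "risk Mp X Y lo (agg M f \<theta>)
      \<le> (\<integral>\<omega>. (\<Sum>j<M. \<theta> j * lo (Y \<omega>) (f j (X \<omega>))) - Cl / 2 * dispersion M f \<theta> (X \<omega>) \<partial>Mp)"
    unfolding risk_def Pop_def
  proof (rule integral_mono_AE)
    show "AE \<omega> in Mp. lo (Y \<omega>) (agg M f \<theta> (X \<omega>))
        \<le> (\<Sum>j<M. \<theta> j * lo (Y \<omega>) (f j (X \<omega>))) - Cl / 2 * dispersion M f \<theta> (X \<omega>)"
      using f_bounded loss_strongly_convex
    proof eventually_elim
      case (elim \<omega>)
      have "M \<noteq> 0" using assms by (cases M) (auto simp: wsimplex_def)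
      with elim assms show ?case
        unfolding dispersion_def agg_def
        by (intro strongly_convex_on_jensen[where C = "{-b..b}"]) (auto simp: wsimplex_def abs_le_iff)
    qed
  qed (intro Bochner_Integration.integrable_diff Bochner_Integration.integrable_sum integrable_mult_right
      integrable_loss_agg[OF assms] integrable_loss_f integrable_dispersion[OF assms]; simp)+
  also have "\<dots> = (\<Sum>j<M. \<theta> j * risk Mp X Y lo (f j)) - Cl / 2 * Vvar Mp X M f \<theta>"
    by (subst Bochner_Integration.integral_diff, (intro Bochner_Integration.integrable_sum
        integrable_mult_right integrable_loss_f integrable_dispersion[OF assms]; simp)+)
      (simp add: Bochner_Integration.integral_sum integrable_loss_f Vvar_eq_integral[OF assms] risk_def Pop_def)
  finally show ?thesis .
qed

lemma risk_agg_wcomb_le: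
  assumes "\<theta> \<in> wsimplex M" "\<theta>' \<in> wsimplex M" "0 \<le> \<alpha>" "\<alpha> \<le> 1"
  shows "risk Mp X Y lo (agg M f (wcomb \<alpha> \<theta> \<theta>'))
    \<le> \<alpha> * risk Mp X Y lo (agg M f \<theta>) + (1 - \<alpha>) * risk Mp X Y lo (agg M f \<theta>')
      - Cl / 2 * \<alpha> * (1 - \<alpha>) * sqnorm Mp X (\<lambda>x. agg M f \<theta> x - agg M f \<theta>' x)"
proof -
  let ?a = "\<lambda>\<omega>. agg M f \<theta> (X \<omega>)" and ?a' = "\<lambda>\<omega>. agg M f \<theta>' (X \<omega>)"
  have "risk Mp X Y lo (agg M f (wcomb \<alpha> \<theta> \<theta>'))
      \<le> (\<integral>\<omega>. \<alpha> * lo (Y \<omega>) (?a \<omega>) + (1 - \<alpha>) * lo (Y \<omega>) (?a' \<omega>)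
             - Cl / 2 * \<alpha> * (1 - \<alpha>) * (?a \<omega> - ?a' \<omega>)\<^sup>2 \<partial>Mp)"
    unfolding risk_def Pop_def
  proof (rule integral_mono_AE)
    show "AE \<omega> in Mp. lo (Y \<omega>) (agg M f (wcomb \<alpha> \<theta> \<theta>') (X \<omega>))
        \<le> \<alpha> * lo (Y \<omega>) (?a \<omega>) + (1 - \<alpha>) * lo (Y \<omega>) (?a' \<omega>)
          - Cl / 2 * \<alpha> * (1 - \<alpha>) * (?a \<omega> - ?a' \<omega>)\<^sup>2"
      using AE_abs_agg_le loss_strongly_convex
    proof eventually_elim
      case (elim \<omega>)
      with assms have "?a \<omega> \<in> {-b..b}" "?a' \<omega> \<in> {-b..b}" by (auto simp: abs_le_iff)
      with elim(2) assms show ?case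
        unfolding agg_wcomb by (intro strongly_convex_onD) auto
    qed
  qed (intro Bochner_Integration.integrable_diff Bochner_Integration.integrable_add integrable_mult_right
      integrable_loss_agg integrable_sq_agg_diff wcomb_in_wsimplex assms)+
  also have "\<dots> = \<alpha> * risk Mp X Y lo (agg M f \<theta>) + (1 - \<alpha>) * risk Mp X Y lo (agg M f \<theta>')
      - Cl / 2 * \<alpha> * (1 - \<alpha>) * sqnorm Mp X (\<lambda>x. agg M f \<theta> x - agg M f \<theta>' x)"
    using integrable_loss_agg[OF assms(1)] integrable_loss_agg[OF assms(2)] integrable_sq_agg_diff[OF assms(1,2)]
    by (simp add: risk_def Pop_def sqnorm_def)
  finally show ?thesis .
qed

lemma Vvar_wcomb:
  assumes "\<theta> \<in> wsimplex M" "\<theta>' \<in> wsimplex M" "0 \<le> \<alpha>" "\<alpha> \<le> 1"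
  shows "Vvar Mp X M f (wcomb \<alpha> \<theta> \<theta>')
    = \<alpha> * Vvar Mp X M f \<theta> + (1 - \<alpha>) * Vvar Mp X M f \<theta>'
      + \<alpha> * (1 - \<alpha>) * sqnorm Mp X (\<lambda>x. agg M f \<theta> x - agg M f \<theta>' x)"
  using integrable_dispersion[OF assms(1)] integrable_dispersion[OF assms(2)] integrable_sq_agg_diff[OF assms(1,2)]
  by (simp add: Vvar_eq_integral wcomb_in_wsimplex assms dispersion_wcomb wsimplex_sum_eq_1 sqnorm_def)

text \<open>V is concave along segments, which costs \<mu> of the modulus.\<close>

lemma Pcrit_wcomb_le:
  assumes "\<theta> \<in> wsimplex M" "\<theta>' \<in> wsimplex M" "0 \<le> \<alpha>" "\<alpha> \<le> 1" "\<nu> \<le> 1"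
  shows "Pcrit Mp X Y n M f lo \<nu> \<mu> \<beta> \<pi> (wcomb \<alpha> \<theta> \<theta>')
    \<le> \<alpha> * Pcrit Mp X Y n M f lo \<nu> \<mu> \<beta> \<pi> \<theta> + (1 - \<alpha>) * Pcrit Mp X Y n M f lo \<nu> \<mu> \<beta> \<pi> \<theta>'
      - ((1 - \<nu>) * Cl / 2 - \<mu>) * \<alpha> * (1 - \<alpha>) * sqnorm Mp X (\<lambda>x. agg M f \<theta> x - agg M f \<theta>' x)"
proof -
  have "(1 - \<nu>) * risk Mp X Y lo (agg M f (wcomb \<alpha> \<theta> \<theta>'))
      \<le> (1 - \<nu>) * (\<alpha> * risk Mp X Y lo (agg M f \<theta>) + (1 - \<alpha>) * risk Mp X Y lo (agg M f \<theta>')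
        - Cl / 2 * \<alpha> * (1 - \<alpha>) * sqnorm Mp X (\<lambda>x. agg M f \<theta> x - agg M f \<theta>' x))"
    using risk_agg_wcomb_le[OF assms(1-4)] assms(5) by (intro mult_left_mono) auto
  moreover obtain q where "\<beta> / real n = q" by simp
  ultimately show ?thesis
    using assms
    by (simp add: Pcrit_eq wcomb_in_wsimplex sum_wcomb_mult Kdiv_wcomb Vvar_wcomb) (simp add: algebra_simps)
qed

lemma Pcrit_growth_at_min:
  assumes "\<theta> \<in> wsimplex M" "\<theta>s \<in> wsimplex M" "\<nu> \<le> 1"
    and min: "\<And>\<theta>'. \<theta>' \<in> wsimplex M \<Longrightarrow> Pcrit Mp X Y n M f lo \<nu> \<mu> \<beta> \<pi> \<theta>s \<le> Pcrit Mp X Y n M f lo \<nu> \<mu> \<beta> \<pi> \<theta>'"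
  shows "((1 - \<nu>) * Cl / 2 - \<mu>) * sqnorm Mp X (\<lambda>x. agg M f \<theta> x - agg M f \<theta>s x)
    \<le> Pcrit Mp X Y n M f lo \<nu> \<mu> \<beta> \<pi> \<theta> - Pcrit Mp X Y n M f lo \<nu> \<mu> \<beta> \<pi> \<theta>s"
proof (rule chord_defect_le_of_min[where g = "\<lambda>\<alpha>. Pcrit Mp X Y n M f lo \<nu> \<mu> \<beta> \<pi> (wcomb \<alpha> \<theta> \<theta>s)"])
  fix \<alpha> :: real assume "0 < \<alpha>" "\<alpha> \<le> 1"
  then show "Pcrit Mp X Y n M f lo \<nu> \<mu> \<beta> \<pi> \<theta>s \<le> Pcrit Mp X Y n M f lo \<nu> \<mu> \<beta> \<pi> (wcomb \<alpha> \<theta> \<theta>s)"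
    using assms(1,2) by (intro min wcomb_in_wsimplex) auto
  show "Pcrit Mp X Y n M f lo \<nu> \<mu> \<beta> \<pi> (wcomb \<alpha> \<theta> \<theta>s)
      \<le> \<alpha> * Pcrit Mp X Y n M f lo \<nu> \<mu> \<beta> \<pi> \<theta> + (1 - \<alpha>) * Pcrit Mp X Y n M f lo \<nu> \<mu> \<beta> \<pi> \<theta>s
        - ((1 - \<nu>) * Cl / 2 - \<mu>) * sqnorm Mp X (\<lambda>x. agg M f \<theta> x - agg M f \<theta>s x) * \<alpha> * (1 - \<alpha>)"
    using Pcrit_wcomb_le[OF assms(1,2) _ _ assms(3), of \<alpha>] \<open>0 < \<alpha>\<close> \<open>\<alpha> \<le> 1\<close>
    by (simp add: mult_ac)
qed

lemma sum_sqnorm_dev_agg: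
  assumes "\<theta> \<in> wsimplex M" "\<theta>' \<in> wsimplex M"
  shows "(\<Sum>j<M. \<theta> j * sqnorm Mp X (\<lambda>x. f j x - agg M f \<theta>' x))
    = Vvar Mp X M f \<theta> + sqnorm Mp X (\<lambda>x. agg M f \<theta> x - agg M f \<theta>' x)"
proof -
  have "(\<Sum>j<M. \<theta> j * sqnorm Mp X (\<lambda>x. f j x - agg M f \<theta>' x))
      = (\<integral>\<omega>. (\<Sum>j<M. \<theta> j * (f j (X \<omega>) - agg M f \<theta>' (X \<omega>))\<^sup>2) \<partial>Mp)"
    unfolding sqnorm_def
    by (subst Bochner_Integration.integral_sum) (auto intro: integrable_sq_f_agg_diff assms(2))
  also have "\<dots> = (\<integral>\<omega>. dispersion M f \<theta> (X \<omega>) + (agg M f \<theta> (X \<omega>) - agg M f \<theta>' (X \<omega>))\<^sup>2 \<partial>Mp)"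
    by (simp add: sum_sq_dev_agg_eq wsimplex_sum_eq_1[OF assms(1)])
  finally show ?thesis
    using integrable_dispersion[OF assms(1)] integrable_sq_agg_diff[OF assms]
    by (simp add: Vvar_eq_integral[OF assms(1)] sqnorm_def)
qed

lemma Hmat_bilinear_eq:
  assumes "\<theta> \<in> wsimplex M" "\<theta>' \<in> wsimplex M"
  shows "(\<Sum>j<M. \<Sum>k<M. \<theta> j * Hmat Mp X f j k * \<theta>' k)
    = Vvar Mp X M f \<theta> + Vvar Mp X M f \<theta>' + sqnorm Mp X (\<lambda>x. agg M f \<theta> x - agg M f \<theta>' x)"
proof -
  have summand: "integrable Mp (\<lambda>\<omega>. \<theta> j * (f j (X \<omega>) - f k (X \<omega>))\<^sup>2 * \<theta>' k)" if "j < M" "k < M" for j k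
    using integrable_sq_f_diff[OF that] by simp
  have "(\<Sum>j<M. \<Sum>k<M. \<theta> j * Hmat Mp X f j k * \<theta>' k)
      = (\<Sum>j<M. \<Sum>k<M. (\<integral>\<omega>. \<theta> j * (f j (X \<omega>) - f k (X \<omega>))\<^sup>2 * \<theta>' k \<partial>Mp))"
    by (simp add: Hmat_def sqnorm_def)
  also have "\<dots> = (\<Sum>j<M. (\<integral>\<omega>. (\<Sum>k<M. \<theta> j * (f j (X \<omega>) - f k (X \<omega>))\<^sup>2 * \<theta>' k) \<partial>Mp))"
    by (intro sum.cong refl Bochner_Integration.integral_sum[symmetric] summand; simp)
  also have "\<dots> = (\<integral>\<omega>. (\<Sum>j<M. \<Sum>k<M. \<theta> j * (f j (X \<omega>) - f k (X \<omega>))\<^sup>2 * \<theta>' k) \<partial>Mp)"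
    by (subst Bochner_Integration.integral_sum) (auto intro!: Bochner_Integration.integrable_sum intro: summand)
  also have "\<dots> = (\<integral>\<omega>. dispersion M f \<theta> (X \<omega>) + dispersion M f \<theta>' (X \<omega>)
      + (agg M f \<theta> (X \<omega>) - agg M f \<theta>' (X \<omega>))\<^sup>2 \<partial>Mp)"
    by (simp add: sum_pairwise_sq_dist_eq wsimplex_sum_eq_1 assms)
  finally show ?thesis
    using integrable_dispersion[OF assms(1)] integrable_dispersion[OF assms(2)] integrable_sq_agg_diff[OF assms]
    by (simp add: Vvar_eq_integral assms sqnorm_def)
qed

lemma Zn_eq:
  assumes "\<theta>h \<in> wsimplex M" "\<theta>s \<in> wsimplex M"
  shows "Zn Mp X Y n xs ys M f lo \<nu> \<mu> s \<pi> \<theta>h \<theta>s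
    = (Pop Mp X Y (tloss M f lo \<nu> \<theta>h) - Pop Mp X Y (tloss M f lo \<nu> \<theta>s))
      - (Emp n xs ys (tloss M f lo \<nu> \<theta>h) - Emp n xs ys (tloss M f lo \<nu> \<theta>s))
      - 2 * \<mu> * Vvar Mp X M f \<theta>h - \<mu> * Vvar Mp X M f \<theta>s
      - 2 * \<mu> * sqnorm Mp X (\<lambda>x. agg M f \<theta>h x - agg M f \<theta>s x) - Kdiv M \<pi> \<theta>h / s"
  using integrable_tloss[OF assms(1)] integrable_tloss[OF assms(2)]
  unfolding Zn_def Let_def sum_sqnorm_dev_agg[OF assms] Hmat_bilinear_eq[OF assms]
  by (simp add: Pop_def Emp_diff algebra_simps)

lemma risk_agg_le_Pcrit_min_plus_Zn:
  assumes nu: "0 < \<nu>" "\<nu> < 1" and s: "s > 0" and n: "n \<ge> 1"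
    and mu: "10 * \<mu> \<le> (1 - \<nu>) * Cl" "10 * \<mu> \<le> \<nu> * Cl" and beta: "\<beta> \<ge> 3 * real n / s"
    and prior: "\<And>j. j < M \<Longrightarrow> \<pi> j > 0" "(\<Sum>j<M. \<pi> j) = 1"
    and \<theta>s: "\<theta>s \<in> wsimplex M"
      "\<And>\<theta>. \<theta> \<in> wsimplex M \<Longrightarrow> Pcrit Mp X Y n M f lo \<nu> \<mu> \<beta> \<pi> \<theta>s \<le> Pcrit Mp X Y n M f lo \<nu> \<mu> \<beta> \<pi> \<theta>"
    and \<theta>h: "\<theta>h \<in> wsimplex M"
      "\<And>\<theta>. \<theta> \<in> wsimplex M \<Longrightarrow> Qcrit n xs ys M f lo \<nu> \<beta> \<pi> \<theta>h \<le> Qcrit n xs ys M f lo \<nu> \<beta> \<pi> \<theta>"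
  shows "risk Mp X Y lo (agg M f \<theta>h)
    \<le> Pcrit Mp X Y n M f lo \<nu> \<mu> \<beta> \<pi> \<theta>s + 2 * Zn Mp X Y n xs ys M f lo \<nu> \<mu> s \<pi> \<theta>h \<theta>s"
proof -
  define D where "D = sqnorm Mp X (\<lambda>x. agg M f \<theta>h x - agg M f \<theta>s x)"
  define Vh where "Vh = Vvar Mp X M f \<theta>h"
  define Kh where "Kh = Kdiv M \<pi> \<theta>h"
  define Rh where "Rh = risk Mp X Y lo (agg M f \<theta>h)"
  define Sh where "Sh = (\<Sum>j<M. \<theta>h j * risk Mp X Y lo (f j))"
  have Kh_nonneg: "Kh \<ge> 0"
    unfolding Kh_def using \<theta>h(1) prior by (rule Kdiv_nonneg)
  have "4 * \<mu> * D \<le> ((1 - \<nu>) * Cl / 2 - \<mu>) * D"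
    using mu sqnorm_nonneg[of Mp X] unfolding D_def by (intro mult_right_mono) auto
  also have "\<dots> \<le> Pcrit Mp X Y n M f lo \<nu> \<mu> \<beta> \<pi> \<theta>h - Pcrit Mp X Y n M f lo \<nu> \<mu> \<beta> \<pi> \<theta>s"
    unfolding D_def using \<theta>s \<theta>h nu by (intro Pcrit_growth_at_min) auto
  finally have growth: "4 * \<mu> * D \<le> \<dots>" .
  have "5 * \<mu> * Vh \<le> \<nu> * Cl / 2 * Vh"
    using mu Vvar_nonneg[OF \<theta>h(1)] unfolding Vh_def by (intro mult_right_mono) auto
  moreover have "3 * (Kh / s) \<le> \<beta> / real n * Kh"
    using mult_right_mono[OF _ Kh_nonneg, of "3 / s" "\<beta> / real n"] beta n s by (simp add: field_simps)
  moreover have "\<nu> * Rh \<le> \<nu> * Sh - \<nu> * Cl / 2 * Vh"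
    using mult_left_mono[OF risk_agg_le_mixture[OF \<theta>h(1)], of \<nu>] nu
    unfolding Rh_def Sh_def Vh_def by (simp add: algebra_simps)
  moreover have "Kh / s \<ge> 0"
    using Kh_nonneg s by simp
  moreover have "Emp n xs ys (tloss M f lo \<nu> \<theta>h) + \<beta> / real n * Kh
      \<le> Emp n xs ys (tloss M f lo \<nu> \<theta>s) + \<beta> / real n * Kdiv M \<pi> \<theta>s"
    using \<theta>h(2)[OF \<theta>s(1)] by (simp add: Qcrit_eq[OF prior(1)] Kh_def)
  moreover have "Pop Mp X Y (tloss M f lo \<nu> \<theta>h) = Rh - \<nu> * Rh + \<nu> * Sh"
    unfolding Rh_def Sh_def Pop_tloss[OF \<theta>h(1)] by (simp add: algebra_simps)
  moreover note Zn_eq[OF \<theta>h(1) \<theta>s(1), where n = n and xs = xs and ys = ys and \<nu> = \<nu> and \<mu> = \<mu>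
      and s = s and \<pi> = \<pi>, folded D_def Vh_def Kh_def]
  ultimately show ?thesis
    using growth unfolding Pcrit_def Rh_def[symmetric] Vh_def[symmetric] Kh_def[symmetric]
    by argo
qed

end

theorem proposition4:
  fixes Mp :: "'w measure" and S :: "'a measure" and X :: "'w \<Rightarrow> 'a" and Y :: "'w \<Rightarrow> real"
    and lo :: "real \<Rightarrow> real \<Rightarrow> real" and f :: "nat \<Rightarrow> 'a \<Rightarrow> real" and M n :: nat
    and xs :: "nat \<Rightarrow> 'a" and ys :: "nat \<Rightarrow> real"
    and \<pi> \<theta>h \<theta>s :: "nat \<Rightarrow> real" and b Cb Cl \<nu> s \<mu> \<beta> :: real
  assumes prob: "prob_space Mp"
    and X_meas: "X \<in> measurable Mp S" and Y_meas: "Y \<in> borel_measurable Mp"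
    and f_meas: "\<And>j. j < M \<Longrightarrow> f j \<in> borel_measurable S"
    and M_pos: "M \<ge> 1" and n_pos: "n \<ge> 1"
    and b_pos: "b > 0" and Cl_pos: "Cl > 0"
    and Y_bd: "AE \<omega> in Mp. \<bar>Y \<omega>\<bar> \<le> b"
    and f_bd: "AE \<omega> in Mp. \<forall>j<M. \<bar>f j (X \<omega>)\<bar> \<le> b"
    and loss_asm: "AE \<omega> in Mp. loss_ok lo b Cb Cl (Y \<omega>)"
    and risk_int: "\<And>\<theta>. \<theta> \<in> wsimplex M \<Longrightarrow> integrable Mp (\<lambda>\<omega>. lo (Y \<omega>) (agg M f \<theta> (X \<omega>)))"
    and data_X: "\<And>i. i < n \<Longrightarrow> xs i \<in> space S"
    and data_Y_bd: "\<And>i. i < n \<Longrightarrow> \<bar>ys i\<bar> \<le> b"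
    and data_f_bd: "\<And>i j. i < n \<Longrightarrow> j < M \<Longrightarrow> \<bar>f j (xs i)\<bar> \<le> b"
    and data_loss: "\<And>i. i < n \<Longrightarrow> loss_ok lo b Cb Cl (ys i)"
    and prior_pos: "\<And>j. j < M \<Longrightarrow> \<pi> j > 0" and prior_sum: "(\<Sum>j<M. \<pi> j) = 1"
    and nu: "0 < \<nu>" "\<nu> < 1" and s_pos: "s > 0" and mu_pos: "\<mu> > 0" and beta_pos: "\<beta> > 0"
    and mu_le: "10 * \<mu> \<le> min (1 - \<nu>) \<nu> * Cl"
    and beta_ge: "\<beta> \<ge> 3 * real n / s"
    and thetas_min: "\<theta>s \<in> wsimplex M"
      "\<And>\<theta>. \<theta> \<in> wsimplex M \<Longrightarrow> Pcrit Mp X Y n M f lo \<nu> \<mu> \<beta> \<pi> \<theta>s \<le> Pcrit Mp X Y n M f lo \<nu> \<mu> \<beta> \<pi> \<theta>"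
    and thetah_min: "\<theta>h \<in> wsimplex M"
      "\<And>\<theta>. \<theta> \<in> wsimplex M \<Longrightarrow> Qcrit n xs ys M f lo \<nu> \<beta> \<pi> \<theta>h \<le> Qcrit n xs ys M f lo \<nu> \<beta> \<pi> \<theta>"
  shows "risk Mp X Y lo (agg M f \<theta>h)
     \<le> Min ((\<lambda>j. risk Mp X Y lo (f j) + (\<beta> / real n) * ln (1 / \<pi> j)) ` {..<M})
        + 2 * Zn Mp X Y n xs ys M f lo \<nu> \<mu> s \<pi> \<theta>h \<theta>s"
proof -
  (* The bound holds for every data set. *)
  interpret aggregation_model Mp S X Y M f lo b Cl
  proof (intro aggregation_model.intro aggregation_model_axioms.intro)
    show "AE \<omega> in Mp. strongly_convex_on {-b..b} Cl (lo (Y \<omega>))"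
      using loss_asm by eventually_elim (rule loss_ok_strongly_convex_on)
  qed (fact prob X_meas f_meas f_bd risk_int)+
  have "10 * \<mu> \<le> (1 - \<nu>) * Cl" "10 * \<mu> \<le> \<nu> * Cl"
    using mu_le Cl_pos mult_right_mono[OF min.cobounded1, of Cl "1 - \<nu>" \<nu>]
      mult_right_mono[OF min.cobounded2, of Cl "1 - \<nu>" \<nu>] by linarith+
  then have "risk Mp X Y lo (agg M f \<theta>h)
      \<le> Pcrit Mp X Y n M f lo \<nu> \<mu> \<beta> \<pi> \<theta>s + 2 * Zn Mp X Y n xs ys M f lo \<nu> \<mu> s \<pi> \<theta>h \<theta>s"
    using nu s_pos n_pos beta_ge prior_pos prior_sum thetas_min thetah_min
    by (intro risk_agg_le_Pcrit_min_plus_Zn) auto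
  moreover have "Pcrit Mp X Y n M f lo \<nu> \<mu> \<beta> \<pi> \<theta>s
      \<le> Min ((\<lambda>j. risk Mp X Y lo (f j) + (\<beta> / real n) * ln (1 / \<pi> j)) ` {..<M})"
    using M_pos thetas_min(2)[OF unit_weight_in_wsimplex]
    by (intro Min.boundedI) (auto simp: Pcrit_unit_weight lessThan_empty_iff)
  ultimately show ?thesis by linarith
qed

end
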